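(* Every fractionally $\mathrm{tree}\text{-}\alpha$-fragile graph class has bounded induced biclique number.
   Context: $\alpha$ denotes independence number. The tree-independence number $\mathrm{tree}\text{-}\alpha(G)$ is the minimum over tree decompositions $(T,\{X_t\})$ of $G$ (tree $T$, bags covering vertices and edges, each vertex's bags forming a subtree) of $\max_t\alpha(G[X_t])$. For $\beta\le1$, a $\beta$-general cover of $G$ is a multiset $\mathcal{C}$ of subsets of $V(G)$ with each vertex in at least $\beta|\mathcal{C}|$ members. A class $\mathcal{G}$ (not necessarily hereditary) is fractionally $\mathrm{tree}\text{-}\alpha$-fragile if there is $f\colon\mathbb{N}\to\mathbb{N}$ such that for every $r\in\mathbb{N}$ every $G\in\mathcal{G}$ has a $(1-1/r)$-general cover $\mathcal{C}$ with $\mathrm{tree}\text{-}\alpha(G[C])\le f(r)$ for all $C\in\mathcal{C}$. The induced biclique number of $G$ is the maximum $n$ such that $K_{n,n}$ is an induced subgraph of $G$. *)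

theory Defs
  imports Complex_Main "HOL-Library.Multiset"
begin

type_synonym 'a graph = "'a set \<times> 'a set set"

definition verts :: "'a graph \<Rightarrow> 'a set" where "verts G = fst G"
definition edges :: "'a graph \<Rightarrow> 'a set set" where "edges G = snd G"

definition is_graph :: "'a graph \<Rightarrow> bool" where
  "is_graph G \<longleftrightarrow> finite (verts G) \<and> (\<forall>e\<in>edges G. card e = 2 \<and> e \<subseteq> verts G)"

definition adj :: "'a graph \<Rightarrow> 'a \<Rightarrow> 'a \<Rightarrow> bool" where
  "adj G u v \<longleftrightarrow> {u, v} \<in> edges G"

definition induced :: "'a graph \<Rightarrow> 'a set \<Rightarrow> 'a graph" where
  "induced G C = (verts G \<inter> C, {e \<in> edges G. e \<subseteq> C})"

definition independent :: "'a graph \<Rightarrow> 'a set \<Rightarrow> bool" where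
  "independent G S \<longleftrightarrow> S \<subseteq> verts G \<and> (\<forall>u\<in>S. \<forall>v\<in>S. \<not> adj G u v)"

definition alpha :: "'a graph \<Rightarrow> nat" where
  "alpha G = Max {card S | S. independent G S}"

definition tree_rel :: "nat set \<Rightarrow> nat set set \<Rightarrow> (nat \<times> nat) set" where
  "tree_rel S F = {(s, t). s \<in> S \<and> t \<in> S \<and> {s, t} \<in> F}"

definition connected_in :: "nat set \<Rightarrow> nat set set \<Rightarrow> bool" where
  "connected_in S F \<longleftrightarrow> (\<forall>s\<in>S. \<forall>t\<in>S. (s, t) \<in> (tree_rel S F)\<^sup>*)"

definition is_tree :: "nat set \<Rightarrow> nat set set \<Rightarrow> bool" where
  "is_tree I F \<longleftrightarrow> finite I \<and> I \<noteq> {} \<and> (\<forall>e\<in>F. card e = 2 \<and> e \<subseteq> I)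
     \<and> connected_in I F \<and> card F = card I - 1"

definition is_tree_decomposition ::
  "'a graph \<Rightarrow> nat set \<Rightarrow> nat set set \<Rightarrow> (nat \<Rightarrow> 'a set) \<Rightarrow> bool" where
  "is_tree_decomposition G I F X \<longleftrightarrow>
     is_tree I F
     \<and> (\<forall>t\<in>I. X t \<subseteq> verts G)
     \<and> (\<forall>v\<in>verts G. \<exists>t\<in>I. v \<in> X t)
     \<and> (\<forall>e\<in>edges G. \<exists>t\<in>I. e \<subseteq> X t)
     \<and> (\<forall>v\<in>verts G. connected_in {t\<in>I. v \<in> X t} F)"

definition tree_alpha :: "'a graph \<Rightarrow> nat" where
  "tree_alpha G = (LEAST k. \<exists>I F X. is_tree_decomposition G I F X
                              \<and> (\<forall>t\<in>I. alpha (induced G (X t)) \<le> k))"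

definition general_cover :: "'a graph \<Rightarrow> real \<Rightarrow> 'a set multiset \<Rightarrow> bool" where
  "general_cover G \<beta> \<C> \<longleftrightarrow>
     (\<forall>C\<in>#\<C>. C \<subseteq> verts G)
     \<and> (\<forall>v\<in>verts G. real (size (filter_mset (\<lambda>C. v \<in> C) \<C>)) \<ge> \<beta> * real (size \<C>))"

definition fractionally_tree_alpha_fragile :: "'a graph set \<Rightarrow> bool" where
  "fractionally_tree_alpha_fragile \<G> \<longleftrightarrow>
     (\<exists>f :: nat \<Rightarrow> nat. \<forall>r::nat. r \<ge> 1 \<longrightarrow> (\<forall>G\<in>\<G>. \<exists>\<C>. \<C> \<noteq> {#}
         \<and> general_cover G (1 - 1 / real r) \<C>
         \<and> (\<forall>C\<in>#\<C>. tree_alpha (induced G C) \<le> f r)))"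

definition has_induced_biclique :: "'a graph \<Rightarrow> nat \<Rightarrow> bool" where
  "has_induced_biclique G n \<longleftrightarrow> (\<exists>A B. A \<subseteq> verts G \<and> B \<subseteq> verts G \<and> A \<inter> B = {}
     \<and> card A = n \<and> card B = n
     \<and> independent G A \<and> independent G B
     \<and> (\<forall>a\<in>A. \<forall>b\<in>B. adj G a b))"

definition induced_biclique_number :: "'a graph \<Rightarrow> nat" where
  "induced_biclique_number G = Max {n. has_induced_biclique G n}"

end

theory Submission
  imports Defs
begin

(* Take r = 4, so that every vertex lies in at least 3/4 of the members of the cover. If (A, B)
   is an induced K_{n,n}, averaging gives a member C containing at least 3/4 of the vertices of
   A and B, hence at least n/2 of each side. In a tree decomposition of G[C], the nodes whose bags
   contain a vertex form a subtree, and these subtrees meet for a in A and b in B because ab is an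
   edge. By a Helly-type property of trees some node lies in all subtrees of A or in all subtrees
   of B, so its bag contains an independent set of size at least n/2. Hence n <= 2 f(4). *)

definition subtree :: "nat set \<Rightarrow> nat set set \<Rightarrow> nat set \<Rightarrow> bool" where
  "subtree I F S \<longleftrightarrow> S \<noteq> {} \<and> S \<subseteq> I \<and> connected_in S F"

definition is_leaf :: "nat set set \<Rightarrow> nat \<Rightarrow> nat \<Rightarrow> bool" where
  "is_leaf F l p \<longleftrightarrow> l \<noteq> p \<and> {l, p} \<in> F \<and> (\<forall>e\<in>F. l \<in> e \<longrightarrow> e = {l, p})"

lemma is_leaf_unique_neighbour:
  assumes "is_leaf F l p" "{l, s} \<in> F"
  shows "s = p"
  using assms unfolding is_leaf_def by (metis doubleton_eq_iff insertI1)

lemma is_tree_finite_edges: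
  assumes "is_tree I F"
  shows "finite F"
proof -
  have "F \<subseteq> Pow I" "finite I" using assms unfolding is_tree_def by auto
  then show ?thesis by (meson finite_Pow_iff finite_subset)
qed

lemma connected_in_leaf_neighbour:
  assumes conn: "connected_in S F" and leaf: "is_leaf F l p"
    and "l \<in> S" "S \<noteq> {l}"
  shows "p \<in> S"
proof -
  obtain s where s: "s \<in> S" "s \<noteq> l" using assms(3,4) by blast
  have "(l, s) \<in> (tree_rel S F)\<^sup>*" using conn \<open>l \<in> S\<close> s unfolding connected_in_def by auto
  then obtain u where "(l, u) \<in> tree_rel S F"
    using s(2) by (cases rule: converse_rtranclE) auto
  then show ?thesis using is_leaf_unique_neighbour[OF leaf] by (auto simp: tree_rel_def)
qed

lemma connected_in_remove_leaf:
  assumes conn: "connected_in S F" and leaf: "is_leaf F l p"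
  shows "connected_in (S - {l}) (F - {{l, p}})"
proof -
  have drop: "tree_rel (S - {l}) (F - {{l, p}}) = tree_rel (S - {l}) F"
    unfolding tree_rel_def by (auto simp: doubleton_eq_iff)
  let ?R = "tree_rel S F" and ?R' = "tree_rel (S - {l}) F"
  \<comment> \<open>a walk that reaches the leaf l must arrive from p, so it can be cut off at p\<close>
  have reroute: "(x, y) \<in> ?R\<^sup>* \<Longrightarrow> x \<in> S - {l} \<Longrightarrow>
      (y \<noteq> l \<longrightarrow> (x, y) \<in> ?R'\<^sup>*) \<and> (y = l \<longrightarrow> (x, p) \<in> ?R'\<^sup>*)" for x y
  proof (induction rule: rtrancl_induct)
    case base then show ?case by auto
  next
    case (step y z)
    have yz: "y \<in> S" "z \<in> S" "{y, z} \<in> F" using step.hyps(2) by (auto simp: tree_rel_def)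
    consider "y = l" | "z = l" | "y \<noteq> l" "z \<noteq> l" by blast
    then show ?case
    proof cases
      case 1
      then have "z = p" if "z \<noteq> l" using is_leaf_unique_neighbour[OF leaf] yz that by auto
      then show ?thesis using step.IH step.prems 1 by auto
    next
      case 2
      then have "y = p" using is_leaf_unique_neighbour[OF leaf] yz by (simp add: insert_commute)
      moreover have "p \<noteq> l" using leaf by (simp add: is_leaf_def)
      ultimately show ?thesis using step.IH step.prems 2 by simp
    next
      case 3
      then have "(y, z) \<in> ?R'" using yz by (auto simp: tree_rel_def)
      then show ?thesis using step.IH step.prems 3 by (meson rtrancl.rtrancl_into_rtrancl)
    qed
  qed
  show ?thesis
    unfolding connected_in_def drop
  proof (intro ballI)
    fix s t assume "s \<in> S - {l}" "t \<in> S - {l}"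
    moreover have "(s, t) \<in> ?R\<^sup>*" using conn calculation unfolding connected_in_def by auto
    ultimately show "(s, t) \<in> ?R'\<^sup>*" using reroute by auto
  qed
qed

lemma tree_has_leaf:
  assumes T: "is_tree I F" and two: "2 \<le> card I"
  obtains l p where "l \<in> I" "is_leaf F l p"
proof -
  have fI: "finite I" and eF: "\<forall>e\<in>F. card e = 2 \<and> e \<subseteq> I" and conn: "connected_in I F"
    and cF: "card F = card I - 1" using T unfolding is_tree_def by auto
  have fF: "finite F" using is_tree_finite_edges[OF T] .
  define deg where "deg t = card {e\<in>F. t \<in> e}" for t
  have "(\<Sum>t\<in>I. deg t) = (\<Sum>t\<in>I. \<Sum>e\<in>F. if t \<in> e then 1 else 0)"
    unfolding deg_def using fF by (simp add: sum.If_cases Int_def conj_commute)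
  also have "\<dots> = (\<Sum>e\<in>F. \<Sum>t\<in>I. if t \<in> e then 1 else 0)" by (rule sum.swap)
  also have "\<dots> = (\<Sum>e\<in>F. card (I \<inter> e))" using fI by (simp add: sum.If_cases)
  also have "\<dots> = 2 * card F" using eF by (simp add: Int_absorb1)
  finally have handshake: "(\<Sum>t\<in>I. deg t) = 2 * card F" .
  have deg_pos: "1 \<le> deg t" if "t \<in> I" for t
  proof -
    have "\<not> I \<subseteq> {t}" using two card_mono[of "{t}" I] by auto
    then obtain s where s: "s \<in> I" "s \<noteq> t" by blast
    have "(t, s) \<in> (tree_rel I F)\<^sup>*" using conn that s unfolding connected_in_def by auto
    then obtain u where "(t, u) \<in> tree_rel I F" using s by (cases rule: converse_rtranclE) auto
    then have "{t, u} \<in> {e\<in>F. t \<in> e}" by (auto simp: tree_rel_def)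
    moreover have "finite {e\<in>F. t \<in> e}" using fF by simp
    ultimately show ?thesis unfolding deg_def by (metis One_nat_def Suc_leI card_gt_0_iff empty_iff)
  qed
  have "\<exists>l\<in>I. deg l \<le> 1"
  proof (rule ccontr)
    assume "\<not> ?thesis"
    then have "(\<Sum>t\<in>I. 2) \<le> (\<Sum>t\<in>I. deg t)" by (intro sum_mono) auto
    then show False using handshake cF two by simp
  qed
  then obtain l where "l \<in> I" and "deg l = 1" using deg_pos by (meson le_antisym)
  then obtain e where e: "{e\<in>F. l \<in> e} = {e}" unfolding deg_def using card_1_singletonE by blast
  then have "e \<in> F" "l \<in> e" by auto
  then obtain x y where "e = {x, y}" "x \<noteq> y" using eF card_2_iff by metis
  then obtain p where p: "e = {l, p}" "p \<noteq> l" using \<open>l \<in> e\<close> by auto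
  show ?thesis
  proof
    show "l \<in> I" by fact
    show "is_leaf F l p" unfolding is_leaf_def using e p by auto
  qed
qed

lemma is_tree_remove_leaf:
  assumes T: "is_tree I F" and "l \<in> I" and leaf: "is_leaf F l p"
  shows "is_tree (I - {l}) (F - {{l, p}})"
proof -
  have fI: "finite I" and eF: "\<forall>e\<in>F. card e = 2 \<and> e \<subseteq> I" and conn: "connected_in I F"
    and cF: "card F = card I - 1" using T unfolding is_tree_def by auto
  have lp: "l \<noteq> p" "{l, p} \<in> F" using leaf unfolding is_leaf_def by auto
  then have "p \<in> I" using eF by auto
  show ?thesis
    unfolding is_tree_def
  proof (intro conjI)
    show "finite (I - {l})" using fI by simp
    show "I - {l} \<noteq> {}" using \<open>p \<in> I\<close> lp by blast
    show "\<forall>e\<in>F - {{l, p}}. card e = 2 \<and> e \<subseteq> I - {l}"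
      using eF leaf unfolding is_leaf_def by blast
    show "connected_in (I - {l}) (F - {{l, p}})" using connected_in_remove_leaf[OF conn leaf] .
    show "card (F - {{l, p}}) = card (I - {l}) - 1"
      using is_tree_finite_edges[OF T] fI lp \<open>l \<in> I\<close> cF by simp
  qed
qed

lemma subtree_remove_leaf:
  assumes "subtree I F S" and leaf: "is_leaf F l p" and "S \<noteq> {l}"
  shows "subtree (I - {l}) (F - {{l, p}}) (S - {l})"
  using assms connected_in_remove_leaf[OF _ leaf] unfolding subtree_def by blast

lemma cross_intersecting_subtrees_common_node:
  assumes "is_tree I F"
    and "\<forall>a\<in>A. subtree I F (TA a)" and "\<forall>b\<in>B. subtree I F (TB b)"
    and "\<forall>a\<in>A. \<forall>b\<in>B. TA a \<inter> TB b \<noteq> {}"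
  shows "\<exists>t\<in>I. (\<forall>a\<in>A. t \<in> TA a) \<or> (\<forall>b\<in>B. t \<in> TB b)"
  using assms
proof (induction "card I" arbitrary: I F TA TB rule: less_induct)
  case less
  note T = less.prems(1) and sub_A = less.prems(2) and sub_B = less.prems(3)
    and cross = less.prems(4)
  show ?case
  proof (cases "card I < 2")
    case True
    moreover have "0 < card I" using T unfolding is_tree_def by (simp add: card_gt_0_iff)
    ultimately have "card I = 1" by linarith
    then obtain t where I: "I = {t}" by (rule card_1_singletonE)
    then have "\<forall>a\<in>A. t \<in> TA a" using sub_A unfolding subtree_def by fastforce
    then show ?thesis using I by blast
  next
    case False
    then have "2 \<le> card I" by simp
    then obtain l p where "l \<in> I" and leaf: "is_leaf F l p"
      using tree_has_leaf[OF T] by blast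
    \<comment> \<open>a subtree {l} forces l into every subtree of the other family; otherwise pruning l
      keeps all subtrees nonempty, and an intersection at l persists at its neighbour p\<close>
    consider (A_leaf) a where "a \<in> A" "TA a = {l}" | (B_leaf) b where "b \<in> B" "TB b = {l}"
      | (no_leaf) "\<forall>a\<in>A. TA a \<noteq> {l}" "\<forall>b\<in>B. TB b \<noteq> {l}"
      by blast
    then show ?thesis
    proof cases
      case A_leaf
      then have "\<forall>b\<in>B. l \<in> TB b" using cross by fastforce
      then show ?thesis using \<open>l \<in> I\<close> by blast
    next
      case B_leaf
      then have "\<forall>a\<in>A. l \<in> TA a" using cross by fastforce
      then show ?thesis using \<open>l \<in> I\<close> by blast
    next
      case no_leaf
      have leaf_to_neighbour: "p \<in> S" if "subtree I F S" "S \<noteq> {l}" "l \<in> S" for S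
        using connected_in_leaf_neighbour[OF _ leaf] that unfolding subtree_def by blast
      let ?I = "I - {l}" and ?F = "F - {{l, p}}"
      have "finite I" using T unfolding is_tree_def by blast
      then have card_less: "card ?I < card I" using \<open>l \<in> I\<close> by (rule card_Diff1_less)
      have T': "is_tree ?I ?F" using is_tree_remove_leaf[OF T \<open>l \<in> I\<close> leaf] .
      have sub_A': "\<forall>a\<in>A. subtree ?I ?F (TA a - {l})"
        using sub_A no_leaf subtree_remove_leaf[OF _ leaf] by blast
      have sub_B': "\<forall>b\<in>B. subtree ?I ?F (TB b - {l})"
        using sub_B no_leaf subtree_remove_leaf[OF _ leaf] by blast
      have cross': "\<forall>a\<in>A. \<forall>b\<in>B. (TA a - {l}) \<inter> (TB b - {l}) \<noteq> {}"
      proof (intro ballI)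
        fix a b assume "a \<in> A" "b \<in> B"
        then obtain x where x: "x \<in> TA a" "x \<in> TB b" using cross by blast
        show "(TA a - {l}) \<inter> (TB b - {l}) \<noteq> {}"
        proof (cases "x = l")
          case True
          have "p \<in> TA a" using leaf_to_neighbour \<open>a \<in> A\<close> sub_A no_leaf x True by blast
          moreover have "p \<in> TB b" using leaf_to_neighbour \<open>b \<in> B\<close> sub_B no_leaf x True by blast
          moreover have "p \<noteq> l" using leaf unfolding is_leaf_def by blast
          ultimately show ?thesis by blast
        next
          case False
          then show ?thesis using x by blast
        qed
      qed
      show ?thesis using less.hyps[OF card_less T' sub_A' sub_B' cross'] by blast
    qed
  qed
qed

lemma verts_induced [simp]: "verts (induced G C) = verts G \<inter> C"
  unfolding induced_def verts_def by simp

lemma is_graph_induced: "is_graph G \<Longrightarrow> is_graph (induced G C)"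
  unfolding is_graph_def induced_def verts_def edges_def by auto

lemma adj_induced: "u \<in> C \<Longrightarrow> v \<in> C \<Longrightarrow> adj (induced G C) u v \<longleftrightarrow> adj G u v"
  unfolding adj_def induced_def edges_def by simp

lemma independent_induced:
  assumes "independent G S" "S \<subseteq> C"
  shows "independent (induced G C) S"
  using assms unfolding independent_def by (auto dest!: adj_induced[THEN iffD1, rotated 2])

lemma card_le_alpha:
  assumes "finite (verts G)" "independent G S"
  shows "card S \<le> alpha G"
proof -
  have "{card S | S. independent G S} \<subseteq> card ` Pow (verts G)"
    unfolding independent_def by blast
  then have "finite {card S | S. independent G S}"
    by (rule finite_subset) (simp add: assms(1))
  then show ?thesis unfolding alpha_def using assms(2) by (intro Max_ge) auto
qed

lemma tree_alpha_attained:
  assumes "is_graph G"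
  obtains I F X where "is_tree_decomposition G I F X"
    "\<forall>t\<in>I. alpha (induced G (X t)) \<le> tree_alpha G"
proof -
  have "is_tree_decomposition G {0} {} (\<lambda>_. verts G)"
    using assms unfolding is_tree_decomposition_def is_tree_def connected_in_def is_graph_def
    by auto
  then have "\<exists>k I F X. is_tree_decomposition G I F X \<and> (\<forall>t\<in>I. alpha (induced G (X t)) \<le> k)"
    by blast
  then have "\<exists>I F X. is_tree_decomposition G I F X
      \<and> (\<forall>t\<in>I. alpha (induced G (X t)) \<le> tree_alpha G)"
    unfolding tree_alpha_def by (rule LeastI_ex)
  then show ?thesis using that by blast
qed

lemma biclique_min_card_le_tree_alpha:
  assumes G: "is_graph G" and A: "independent G A" and B: "independent G B"
    and complete: "\<forall>a\<in>A. \<forall>b\<in>B. adj G a b"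
  shows "min (card A) (card B) \<le> tree_alpha G"
proof -
  obtain I F X where TD: "is_tree_decomposition G I F X"
    and bags: "\<forall>t\<in>I. alpha (induced G (X t)) \<le> tree_alpha G"
    using tree_alpha_attained[OF G] .
  define T where "T v = {t\<in>I. v \<in> X t}" for v
  have sub: "subtree I F (T v)" if "v \<in> verts G" for v
    using TD that unfolding is_tree_decomposition_def subtree_def T_def by blast
  have "A \<subseteq> verts G" "B \<subseteq> verts G" using A B unfolding independent_def by auto
  moreover have "T a \<inter> T b \<noteq> {}" if "a \<in> A" "b \<in> B" for a b
  proof -
    have "{a, b} \<in> edges G" using complete that unfolding adj_def by blast
    then obtain t where "t \<in> I" "{a, b} \<subseteq> X t"
      using TD unfolding is_tree_decomposition_def by blast
    then show ?thesis unfolding T_def by blast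
  qed
  moreover have "is_tree I F" using TD unfolding is_tree_decomposition_def by blast
  ultimately have "\<exists>t\<in>I. (\<forall>a\<in>A. t \<in> T a) \<or> (\<forall>b\<in>B. t \<in> T b)"
    using sub by (intro cross_intersecting_subtrees_common_node) auto
  then obtain t where "t \<in> I" and "A \<subseteq> X t \<or> B \<subseteq> X t" unfolding T_def by blast
  moreover have "card S \<le> tree_alpha G" if "t \<in> I" "S \<subseteq> X t" "independent G S" for S
  proof -
    have "finite (verts (induced G (X t)))" using is_graph_induced[OF G] unfolding is_graph_def ..
    then have "card S \<le> alpha (induced G (X t))"
      using independent_induced[OF that(3,2)] by (rule card_le_alpha)
    then show ?thesis using bags that(1) by (meson order_trans)
  qed
  ultimately show ?thesis using A B by (meson min.coboundedI1 min.coboundedI2)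
qed

lemma has_induced_biclique_number:
  assumes "is_graph G"
  shows "has_induced_biclique G (induced_biclique_number G)"
proof -
  have "{n. has_induced_biclique G n} \<subseteq> {..card (verts G)}"
    using assms card_mono unfolding has_induced_biclique_def is_graph_def by fastforce
  then have "finite {n. has_induced_biclique G n}" by (rule finite_subset) simp
  moreover have "has_induced_biclique G 0"
    unfolding has_induced_biclique_def independent_def by (intro exI[of _ "{}"]) simp
  ultimately have "Max {n. has_induced_biclique G n} \<in> {n. has_induced_biclique G n}"
    by (intro Max_in) auto
  then show ?thesis unfolding induced_biclique_number_def by simp
qed

lemma sum_mset_card_Int:
  assumes "finite D"
  shows "(\<Sum>C\<in>#M. card (C \<inter> D)) = (\<Sum>v\<in>D. size (filter_mset (\<lambda>C. v \<in> C) M))"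
proof (induction M)
  case empty then show ?case by simp
next
  case (add C M)
  have "(\<Sum>v\<in>D. size (filter_mset (\<lambda>C'. v \<in> C') (add_mset C M)))
      = (\<Sum>v\<in>D. (if v \<in> C then 1 else 0) + size (filter_mset (\<lambda>C'. v \<in> C') M))"
    by (intro sum.cong) auto
  also have "\<dots> = card (C \<inter> D) + (\<Sum>v\<in>D. size (filter_mset (\<lambda>C'. v \<in> C') M))"
    using assms by (simp add: sum.distrib sum.If_cases Int_commute)
  finally show ?case using add.IH by simp
qed

lemma general_cover_heavy_member:
  assumes cover: "general_cover G \<beta> \<C>" and "\<C> \<noteq> {#}" and D: "D \<subseteq> verts G" "finite D"
  obtains C where "C \<in># \<C>" "\<beta> * card D \<le> card (C \<inter> D)"
proof -
  let ?w = "\<lambda>C. card (C \<inter> D)"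
  obtain C where C: "C \<in># \<C>" and heaviest: "\<forall>C'\<in>#\<C>. ?w C' \<le> ?w C"
    using \<open>\<C> \<noteq> {#}\<close> Max_in[of "?w ` set_mset \<C>"] Max_ge[of "?w ` set_mset \<C>"] by fastforce
  have count_bound: "(\<Sum>v\<in>D. size (filter_mset (\<lambda>C. v \<in> C) \<C>)) \<le> ?w C * size \<C>"
  proof -
    have "(\<Sum>v\<in>D. size (filter_mset (\<lambda>C. v \<in> C) \<C>)) = (\<Sum>C'\<in>#\<C>. ?w C')"
      using sum_mset_card_Int[OF D(2)] by simp
    also have "\<dots> \<le> (\<Sum>C'\<in>#\<C>. ?w C)" using heaviest by (intro sum_mset_mono) auto
    also have "\<dots> = ?w C * size \<C>" by simp
    finally show ?thesis .
  qed
  have "\<beta> * card D * size \<C> = (\<Sum>v\<in>D. \<beta> * size \<C>)" by simp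
  also have "\<dots> \<le> (\<Sum>v\<in>D. real (size (filter_mset (\<lambda>C. v \<in> C) \<C>)))"
    using cover D unfolding general_cover_def by (intro sum_mono) auto
  also have "\<dots> = real (\<Sum>v\<in>D. size (filter_mset (\<lambda>C. v \<in> C) \<C>))" by simp
  also have "\<dots> \<le> real (?w C * size \<C>)" using count_bound by (rule of_nat_mono)
  finally have "\<beta> * card D * size \<C> \<le> ?w C * size \<C>" by simp
  moreover have "0 < size \<C>" using \<open>\<C> \<noteq> {#}\<close> by (simp add: nonempty_has_size)
  ultimately show ?thesis using that C by simp
qed

lemma induced_biclique_number_le_cover_bound:
  assumes G: "is_graph G" and "\<C> \<noteq> {#}" and cover: "general_cover G (3 / 4) \<C>"
    and small: "\<forall>C\<in>#\<C>. tree_alpha (induced G C) \<le> k"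
  shows "induced_biclique_number G \<le> 2 * k"
proof -
  define n where "n = induced_biclique_number G"
  obtain A B where AB: "A \<subseteq> verts G" "B \<subseteq> verts G" "A \<inter> B = {}" "card A = n" "card B = n"
    and indep: "independent G A" "independent G B" and complete: "\<forall>a\<in>A. \<forall>b\<in>B. adj G a b"
    using has_induced_biclique_number[OF G] unfolding has_induced_biclique_def n_def by blast
  have fin: "finite A" "finite B"
    using AB(1,2) G finite_subset unfolding is_graph_def by auto
  obtain C where "C \<in># \<C>" and heavy: "3 / 4 * card (A \<union> B) \<le> card (C \<inter> (A \<union> B))"
    using general_cover_heavy_member[OF cover \<open>\<C> \<noteq> {#}\<close>, of "A \<union> B"] AB fin by auto
  have "card (A \<union> B) = 2 * n" using AB fin by (simp add: card_Un_disjoint)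
  moreover have "card (C \<inter> (A \<union> B)) = card (A \<inter> C) + card (B \<inter> C)"
  proof -
    have "C \<inter> (A \<union> B) = (A \<inter> C) \<union> (B \<inter> C)" by blast
    then show ?thesis using fin AB(3) by (simp add: card_Un_disjoint disjoint_iff)
  qed
  ultimately have "3 * n \<le> 2 * (card (A \<inter> C) + card (B \<inter> C))" using heavy by simp
  moreover have "card (A \<inter> C) \<le> n" using fin(1) AB(4) by (metis card_mono inf_le1)
  moreover have "card (B \<inter> C) \<le> n" using fin(2) AB(5) by (metis card_mono inf_le1)
  moreover have "min (card (A \<inter> C)) (card (B \<inter> C)) \<le> tree_alpha (induced G C)"
  proof (rule biclique_min_card_le_tree_alpha[OF is_graph_induced[OF G]])
    have "independent G (A \<inter> C)" "independent G (B \<inter> C)"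
      using indep unfolding independent_def by blast+
    then show "independent (induced G C) (A \<inter> C)" "independent (induced G C) (B \<inter> C)"
      by (simp_all add: independent_induced)
    show "\<forall>a\<in>A \<inter> C. \<forall>b\<in>B \<inter> C. adj (induced G C) a b" using complete by (simp add: adj_induced)
  qed
  moreover have "tree_alpha (induced G C) \<le> k" using small \<open>C \<in># \<C>\<close> by blast
  ultimately show ?thesis unfolding n_def[symmetric] by (simp add: min_def split: if_split_asm)
qed

theorem lemma5p5:
  fixes \<G> :: "'a graph set"
  assumes "\<forall>G\<in>\<G>. is_graph G"
    and "fractionally_tree_alpha_fragile \<G>"
  shows "\<exists>N. \<forall>G\<in>\<G>. induced_biclique_number G \<le> N"
proof -
  obtain f :: "nat \<Rightarrow> nat" where f: "\<forall>r::nat. r \<ge> 1 \<longrightarrow> (\<forall>G\<in>\<G>. \<exists>\<C>. \<C> \<noteq> {#}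
      \<and> general_cover G (1 - 1 / real r) \<C> \<and> (\<forall>C\<in>#\<C>. tree_alpha (induced G C) \<le> f r))"
    using assms(2) unfolding fractionally_tree_alpha_fragile_def by blast
  have "induced_biclique_number G \<le> 2 * f 4" if G: "G \<in> \<G>" for G
  proof -
    obtain \<C> where "\<C> \<noteq> {#}" "general_cover G (3 / 4) \<C>"
      "\<forall>C\<in>#\<C>. tree_alpha (induced G C) \<le> f 4"
      using f[rule_format, of 4 G] G by auto
    then show ?thesis
      using assms(1) G by (intro induced_biclique_number_le_cover_bound) auto
  qed
  then show ?thesis by blast
qed

end
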